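(* Let $(\Omega,\mathcal F,\mathbb P)$ be a probability space. For each $N\in\mathbb N$ let $\{t_j\}_{j\in\mathbb N}=\{t_j^{(N)}\}_{j\in\mathbb N}$ be a sequence of positive random variables on it (dependence on $N$ suppressed) satisfying: (i) $\mathbb E(t_i)=\frac1N$ for all $i$ and all $N$; (ii) there exist $r>0$ and a constant $\tilde C>0$ such that $\mathbb E(t_i^{2+r})\le \frac{\tilde C}{N^{2+r}}$ for all $i$ and all $N$; (iii) for all $m\in\mathbb N$ (and all $N$), the vector $(t_1,\dots,t_m)$ is negatively superadditive dependent. Let $g:\mathbb N\to\mathbb N$ be a function such that $g(N)/N\to L$ as $N\to\infty$ for some $L>0$. Then $\sum_{j=1}^{g(N)}\big[t_j-\mathbb E t_j\big]\to0$ almost surely as $N\to\infty$, and consequently $\sum_{j=1}^{g(N)}t_j\to L$ almost surely.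
   Context: A function $\phi:\mathbb R^m\to\mathbb R$ is superadditive if $\phi(x\vee y)+\phi(x\wedge y)\ge\phi(x)+\phi(y)$ for all $x,y\in\mathbb R^m$, where $\vee$ and $\wedge$ denote componentwise maximum and minimum. A random vector $(X_1,\dots,X_m)$ is negatively superadditive dependent (NSD) if for every superadditive $\phi$ such that the expectation $\mathbb E\phi(X_1,\dots,X_m)$ exists, $\mathbb E\phi(X_1,\dots,X_m)\le\mathbb E\phi(X_1^*,\dots,X_m^* )$, where $X_1^*,\dots,X_m^*$ are independent and $X_i^*$ has the same distribution as $X_i$ for each $i$. *)

theory Defs
  imports "HOL-Probability.Probability"
begin

text \<open>Vectors in R^m are represented as extensional functions on a finite index set I
  (e.g. I = {1..m}); componentwise max/min are taken on I.\<close>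

definition superadditive_on :: "'i set \<Rightarrow> (('i \<Rightarrow> real) \<Rightarrow> real) \<Rightarrow> bool" where
  "superadditive_on I \<phi> \<longleftrightarrow>
     (\<forall>x\<in>PiE I (\<lambda>_. UNIV). \<forall>y\<in>PiE I (\<lambda>_. UNIV).
        \<phi> (\<lambda>i\<in>I. max (x i) (y i)) + \<phi> (\<lambda>i\<in>I. min (x i) (y i)) \<ge> \<phi> x + \<phi> y)"

definition NSD :: "'a measure \<Rightarrow> 'i set \<Rightarrow> ('i \<Rightarrow> 'a \<Rightarrow> real) \<Rightarrow> bool" where
  "NSD M I X \<longleftrightarrow>
     (\<forall>\<phi>. superadditive_on I \<phi>
        \<and> \<phi> \<in> borel_measurable (PiM I (\<lambda>_. borel))
        \<and> integrable M (\<lambda>\<omega>. \<phi> (\<lambda>i\<in>I. X i \<omega>))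
        \<and> integrable (PiM I (\<lambda>i. distr M borel (X i))) \<phi>
      \<longrightarrow> (\<integral>\<omega>. \<phi> (\<lambda>i\<in>I. X i \<omega>) \<partial>M)
          \<le> (\<integral>x. \<phi> x \<partial>(PiM I (\<lambda>i. distr M borel (X i)))))"

end

(* Truncate every t_j at the level c = N^-alpha with alpha = r / (2 (2 + r)).  For truncated,
   hence bounded and monotone, coordinates the exponential of their sum is a superadditive
   function, so negative superadditive dependence bounds its expectation by the product of the
   marginal moment generating functions; a Bernstein-type estimate then makes a deviation of the
   truncated sum exponentially unlikely, of order exp (- kappa N^alpha).  By Markov's inequality
   for the (2 + r)-th moment, both the truncation bias and the probability that some t_j exceeds
   c are O(N^(-1 - r/2)).  Hence the deviation probabilities are summable in N, and Borel-Cantelli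
   gives almost sure convergence; the second claim follows since the means add up to
   g(N)/N, which tends to L. *)

theory Submission
  imports Defs "HOL-Real_Asymp.Real_Asymp"
begin

definition clip :: "real \<Rightarrow> real \<Rightarrow> real" where
  "clip c x = max 0 (min x c)"

lemma mono_clip: "mono (clip c)"
  by (auto simp: mono_def clip_def)

lemma clip_nonneg: "0 \<le> clip c x"
  by (simp add: clip_def)

lemma clip_le_bound: "0 \<le> c \<Longrightarrow> clip c x \<le> c"
  by (simp add: clip_def)

lemma clip_le_self: "0 \<le> x \<Longrightarrow> clip c x \<le> x"
  by (simp add: clip_def)

lemma clip_eq_self: "0 \<le> x \<Longrightarrow> x \<le> c \<Longrightarrow> clip c x = x"
  by (simp add: clip_def)

lemma abs_clip_le: "0 \<le> c \<Longrightarrow> \<bar>clip c x\<bar> \<le> c"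
  by (simp add: clip_def)

lemma borel_measurable_clip [measurable]: "clip c \<in> borel_measurable borel"
  unfolding clip_def by measurable

lemma diff_clip_le_powr:
  assumes "0 < x" "0 < c" "1 \<le> p"
  shows "x - clip c x \<le> x powr p / c powr (p - 1)"
proof (cases "x \<le> c")
  case True
  then show ?thesis using assms by (simp add: clip_eq_self)
next
  case False
  have "x = x * 1" by simp
  also have "\<dots> \<le> x * (x powr (p - 1) / c powr (p - 1))"
    using False assms by (intro mult_left_mono) (auto intro!: powr_mono2)
  also have "\<dots> = x powr p / c powr (p - 1)"
    using assms by (simp add: powr_diff)
  finally show ?thesis using clip_nonneg[of c x] by linarith
qed

lemma convex_on_add_le_add_extremes:
  fixes h :: "real \<Rightarrow> real"
  assumes h: "convex_on UNIV h" and sum: "a + b = u + v"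
    and "v \<le> a" "a \<le> u" "v \<le> b" "b \<le> u"
  shows "h a + h b \<le> h u + h v"
proof (cases "u = v")
  case True
  then show ?thesis using assms by auto
next
  case False
  define s where "s = (a - v) / (u - v)"
  have s: "0 \<le> s" "s \<le> 1" using assms False by (auto simp: s_def field_simps)
  have "s * (u - v) = a - v" using False by (simp add: s_def)
  then have a: "a = (1 - s) * v + s * u" and b: "b = (1 - (1 - s)) * v + (1 - s) * u"
    using sum by (simp_all add: algebra_simps)
  have "h a \<le> (1 - s) * h v + s * h u"
    using convex_onD[OF h, of s v u] s by (simp add: a)
  moreover have "h b \<le> (1 - (1 - s)) * h v + (1 - s) * h u"
    using convex_onD[OF h, of "1 - s" v u] s by (simp add: b)
  ultimately show ?thesis by (simp add: algebra_simps)
qed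

lemma convex_on_exp_mult: "convex_on UNIV (\<lambda>s. exp (l * s))"
proof (rule convex_onI)
  fix t x y :: real
  assume "0 < t" "t < 1"
  then show "exp (l * ((1 - t) *\<^sub>R x + t *\<^sub>R y)) \<le> (1 - t) * exp (l * x) + t * exp (l * y)"
    using convex_onD[OF exp_convex, of t "l * x" "l * y"] by (simp add: algebra_simps)
qed simp

text \<open>A sum of coordinatewise monotone terms is modular, so a convex function of it is
  superadditive.\<close>

lemma superadditive_on_convex_sum:
  fixes f h :: "real \<Rightarrow> real" and I :: "'i set"
  assumes f: "mono f" and h: "convex_on UNIV h"
  shows "superadditive_on I (\<lambda>x. h (\<Sum>i\<in>I. f (x i)))"
  unfolding superadditive_on_def
proof (intro ballI)
  fix x y :: "'i \<Rightarrow> real"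
  define S where "S z = (\<Sum>i\<in>I. f (z i))" for z :: "'i \<Rightarrow> real"
  define sup where "sup = (\<lambda>i\<in>I. max (x i) (y i))"
  define inf where "inf = (\<lambda>i\<in>I. min (x i) (y i))"
  have "S sup + S inf = S x + S y"
    unfolding S_def sup_def inf_def sum.distrib[symmetric]
    by (intro sum.cong) (auto simp: max_def min_def)
  moreover have "S inf \<le> S x" "S inf \<le> S y" "S x \<le> S sup" "S y \<le> S sup"
    unfolding S_def sup_def inf_def by (auto intro!: sum_mono monoD[OF f])
  ultimately have "h (S x) + h (S y) \<le> h (S sup) + h (S inf)"
    by (intro convex_on_add_le_add_extremes[OF h]) auto
  then show "h (S sup) + h (S inf) \<ge> h (S x) + h (S y)"
    by simp
qed

lemma prob_space_PiM_distr:
  assumes "prob_space M" and "\<And>i. i \<in> I \<Longrightarrow> X i \<in> borel_measurable M"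
  shows "prob_space (PiM I (\<lambda>i. distr M borel (X i)))"
  using assms by (auto intro!: prob_space_PiM prob_space.prob_space_distr)

lemma integral_PiM_distr_prod:
  fixes h :: "real \<Rightarrow> real"
  assumes M: "prob_space M" and I: "finite I"
    and X: "\<And>i. i \<in> I \<Longrightarrow> X i \<in> borel_measurable M"
    and h: "h \<in> borel_measurable borel" "\<And>x. \<bar>h x\<bar> \<le> B"
  shows "(\<integral>x. (\<Prod>i\<in>I. h (x i)) \<partial>PiM I (\<lambda>i. distr M borel (X i)))
           = (\<Prod>i\<in>I. \<integral>\<omega>. h (X i \<omega>) \<partial>M)"
proof -
  \<comment> \<open>\<open>distr M borel (X i)\<close> is a probability space only for measurable \<open>X i\<close>,
    so the coordinates outside \<open>I\<close> are replaced by a constant.\<close>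
  define Y where "Y i = (if i \<in> I then X i else (\<lambda>_. 0))" for i
  have Y [measurable]: "Y i \<in> borel_measurable M" for i
    using X by (simp add: Y_def)
  have distr_Y: "prob_space (distr M borel (Y i))" for i
    by (rule prob_space.prob_space_distr[OF M Y])
  then have PS: "product_sigma_finite (\<lambda>i. distr M borel (Y i))"
    by (simp add: product_sigma_finite_def prob_space_imp_sigma_finite)
  have int: "integrable (distr M borel (Y i)) h" for i
    using distr_Y[of i] h by (intro finite_measure.integrable_const_bound[where B=B]) (auto simp: prob_space_def)
  have PiM_eq: "PiM I (\<lambda>i. distr M borel (X i)) = PiM I (\<lambda>i. distr M borel (Y i))"
    by (intro PiM_cong) (auto simp: Y_def)
  have "(\<integral>x. (\<Prod>i\<in>I. h (x i)) \<partial>PiM I (\<lambda>i. distr M borel (X i)))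
          = (\<Prod>i\<in>I. \<integral>y. h y \<partial>distr M borel (Y i))"
    unfolding PiM_eq by (rule product_sigma_finite.product_integral_prod[OF PS I int])
  also have "\<dots> = (\<Prod>i\<in>I. \<integral>\<omega>. h (X i \<omega>) \<partial>M)"
    by (intro prod.cong refl) (simp add: Y_def integral_distr[OF X h(1)])
  finally show ?thesis .
qed

lemma mult_le_abs_mult_bound:
  fixes l y :: real
  assumes "\<bar>y\<bar> \<le> B"
  shows "l * y \<le> \<bar>l\<bar> * B"
proof -
  have "l * y \<le> \<bar>l\<bar> * \<bar>y\<bar>" by (metis abs_ge_self abs_mult)
  also have "\<dots> \<le> \<bar>l\<bar> * B" using assms by (simp add: mult_left_mono)
  finally show ?thesis .
qed

lemma NSD_integral_exp_sum_le_prod: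
  fixes X :: "'i \<Rightarrow> 'a \<Rightarrow> real" and f :: "real \<Rightarrow> real"
  assumes M: "prob_space M" and I: "finite I"
    and X: "\<And>i. i \<in> I \<Longrightarrow> X i \<in> borel_measurable M" and nsd: "NSD M I X"
    and f: "mono f" "f \<in> borel_measurable borel" "\<And>x. \<bar>f x\<bar> \<le> B"
  shows "(\<integral>\<omega>. exp (l * (\<Sum>i\<in>I. f (X i \<omega>))) \<partial>M) \<le> (\<Prod>i\<in>I. \<integral>\<omega>. exp (l * f (X i \<omega>)) \<partial>M)"
proof -
  interpret prob_space M by (fact M)
  define P where "P = PiM I (\<lambda>i. distr M borel (X i))"
  interpret P: prob_space P
    unfolding P_def using M X by (rule prob_space_PiM_distr)
  define \<phi> where "\<phi> x = exp (l * (\<Sum>i\<in>I. f (x i)))" for x :: "'i \<Rightarrow> real"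
  have bound: "\<bar>\<phi> x\<bar> \<le> exp (\<bar>l\<bar> * (card I * B))" for x
    unfolding \<phi>_def
    using order.trans[OF sum_abs sum_mono[of I "\<lambda>i. \<bar>f (x i)\<bar>" "\<lambda>_. B"]] f(3)
    by (simp add: mult_le_abs_mult_bound)
  have \<phi>_borel: "\<phi> \<in> borel_measurable (PiM I (\<lambda>_. borel))"
    unfolding \<phi>_def using f(2) by measurable
  have "(\<integral>\<omega>. exp (l * (\<Sum>i\<in>I. f (X i \<omega>))) \<partial>M) = (\<integral>\<omega>. \<phi> (\<lambda>i\<in>I. X i \<omega>) \<partial>M)"
    by (simp add: \<phi>_def)
  also have "\<dots> \<le> (\<integral>x. \<phi> x \<partial>P)"
  proof (rule nsd[unfolded NSD_def, rule_format, folded P_def], intro conjI)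
    show "superadditive_on I \<phi>"
      unfolding \<phi>_def by (intro superadditive_on_convex_sum f(1) convex_on_exp_mult)
    show "\<phi> \<in> borel_measurable (PiM I (\<lambda>_. borel))" by (fact \<phi>_borel)
    show "integrable M (\<lambda>\<omega>. \<phi> (\<lambda>i\<in>I. X i \<omega>))"
      using bound measurable_compose[OF measurable_restrict[OF X] \<phi>_borel]
      by (intro integrable_const_bound[of _ "exp (\<bar>l\<bar> * (card I * B))"]) auto
    have "\<phi> \<in> borel_measurable P"
      using \<phi>_borel sets_PiM_cong[OF refl, of I "\<lambda>i. distr M borel (X i)" "\<lambda>_. borel"]
      by (simp add: P_def measurable_def space_PiM)
    then show "integrable P \<phi>"
      using bound by (intro P.integrable_const_bound[of _ "exp (\<bar>l\<bar> * (card I * B))"]) auto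
  qed
  also have "\<dots> = (\<integral>x. (\<Prod>i\<in>I. exp (l * f (x i))) \<partial>P)"
    unfolding \<phi>_def sum_distrib_left exp_sum[OF I] ..
  also have "\<dots> = (\<Prod>i\<in>I. \<integral>\<omega>. exp (l * f (X i \<omega>)) \<partial>M)"
    unfolding P_def
    by (rule integral_PiM_distr_prod[OF M I X, where B="exp (\<bar>l\<bar> * B)"])
       (use f in \<open>simp_all add: mult_le_abs_mult_bound\<close>)
  finally show ?thesis .
qed

lemma exp_le_quadratic:
  fixes u :: real
  assumes "\<bar>u\<bar> \<le> 1"
  shows "exp u \<le> 1 + u + u\<^sup>2"
proof (cases "0 \<le> u")
  case True
  then show ?thesis using exp_bound[of u] assms by auto
next
  case False
  have "1 \<le> (1 + u + u\<^sup>2) * (1 - u)"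
    using False mult_nonpos_nonneg[of u "u * u"] by (simp add: algebra_simps power2_eq_square)
  also have "\<dots> \<le> (1 + u + u\<^sup>2) * exp (- u)"
    using assms exp_ge_add_one_self[of "- u"] zero_le_power2[of u]
    by (intro mult_left_mono) (auto simp: abs_le_iff)
  finally show ?thesis by (simp add: exp_minus field_simps)
qed

lemma integral_exp_le_exp_integral:
  fixes Y :: "'a \<Rightarrow> real"
  assumes M: "prob_space M" and Y [measurable]: "Y \<in> borel_measurable M"
    and Y_bounds: "\<And>\<omega>. \<omega> \<in> space M \<Longrightarrow> 0 \<le> Y \<omega> \<and> Y \<omega> \<le> c"
    and lc: "\<bar>l\<bar> * c \<le> 1"
  shows "(\<integral>\<omega>. exp (l * Y \<omega>) \<partial>M) \<le> exp ((l + l\<^sup>2 * c) * (\<integral>\<omega>. Y \<omega> \<partial>M))"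
proof -
  interpret prob_space M by (fact M)
  have abs_Y: "\<bar>Y \<omega>\<bar> \<le> c" if "\<omega> \<in> space M" for \<omega>
    using Y_bounds[OF that] by auto
  then have int_Y: "integrable M Y"
    by (intro integrable_const_bound[where B=c] AE_I2) auto
  have int_exp: "integrable M (\<lambda>\<omega>. exp (l * Y \<omega>))"
    using abs_Y by (intro integrable_const_bound[where B="exp (\<bar>l\<bar> * c)"] AE_I2)
      (simp_all add: mult_le_abs_mult_bound)
  have pointwise: "exp (l * Y \<omega>) \<le> 1 + (l + l\<^sup>2 * c) * Y \<omega>" if \<omega>: "\<omega> \<in> space M" for \<omega>
  proof -
    have Y\<omega>: "0 \<le> Y \<omega>" "Y \<omega> \<le> c" using Y_bounds[OF \<omega>] by auto
    then have "\<bar>l * Y \<omega>\<bar> \<le> 1"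
      using lc by (simp add: abs_mult) (meson abs_ge_zero mult_left_mono order_trans)
    then have "exp (l * Y \<omega>) \<le> 1 + l * Y \<omega> + (l * Y \<omega>)\<^sup>2"
      by (rule exp_le_quadratic)
    also have "\<dots> = 1 + l * Y \<omega> + l\<^sup>2 * (Y \<omega> * Y \<omega>)"
      by (simp add: power2_eq_square)
    also have "\<dots> \<le> 1 + l * Y \<omega> + l\<^sup>2 * (c * Y \<omega>)"
      using Y\<omega> by (intro add_left_mono mult_left_mono mult_right_mono) auto
    finally show ?thesis by (simp add: algebra_simps)
  qed
  have "(\<integral>\<omega>. exp (l * Y \<omega>) \<partial>M) \<le> (\<integral>\<omega>. 1 + (l + l\<^sup>2 * c) * Y \<omega> \<partial>M)"
    using int_Y int_exp pointwise by (intro integral_mono) auto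
  also have "\<dots> = 1 + (l + l\<^sup>2 * c) * (\<integral>\<omega>. Y \<omega> \<partial>M)"
    using int_Y by (simp add: prob_space)
  also have "\<dots> \<le> exp ((l + l\<^sup>2 * c) * (\<integral>\<omega>. Y \<omega> \<partial>M))"
    by (rule exp_ge_add_one_self)
  finally show ?thesis .
qed

lemma NSD_integral_exp_clip_sum_le:
  fixes X :: "'i \<Rightarrow> 'a \<Rightarrow> real"
  assumes M: "prob_space M" and I: "finite I"
    and X: "\<And>i. i \<in> I \<Longrightarrow> X i \<in> borel_measurable M" and nsd: "NSD M I X"
    and c: "0 \<le> c" and lc: "\<bar>l\<bar> * c \<le> 1"
  shows "(\<integral>\<omega>. exp (l * (\<Sum>i\<in>I. clip c (X i \<omega>))) \<partial>M)
           \<le> exp ((l + l\<^sup>2 * c) * (\<Sum>i\<in>I. \<integral>\<omega>. clip c (X i \<omega>) \<partial>M))"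
proof -
  have "(\<integral>\<omega>. exp (l * (\<Sum>i\<in>I. clip c (X i \<omega>))) \<partial>M)
          \<le> (\<Prod>i\<in>I. \<integral>\<omega>. exp (l * clip c (X i \<omega>)) \<partial>M)"
    using c by (intro NSD_integral_exp_sum_le_prod[OF M I X nsd mono_clip, where B=c] abs_clip_le) auto
  also have "\<dots> \<le> (\<Prod>i\<in>I. exp ((l + l\<^sup>2 * c) * (\<integral>\<omega>. clip c (X i \<omega>) \<partial>M)))"
    using c lc X
    by (intro prod_mono conjI integral_nonneg_AE integral_exp_le_exp_integral[OF M])
       (auto simp: clip_nonneg clip_le_bound)
  also have "\<dots> = exp ((l + l\<^sup>2 * c) * (\<Sum>i\<in>I. \<integral>\<omega>. clip c (X i \<omega>) \<partial>M))"
    by (simp add: exp_sum[OF I] sum_distrib_left)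
  finally show ?thesis .
qed

lemma NSD_measure_clip_sum_ge_le:
  fixes X :: "'i \<Rightarrow> 'a \<Rightarrow> real"
  assumes M: "prob_space M" and I: "finite I"
    and X: "\<And>i. i \<in> I \<Longrightarrow> X i \<in> borel_measurable M" and nsd: "NSD M I X"
    and c: "0 \<le> c" and lc: "\<bar>l\<bar> * c \<le> 1"
  shows "measure M {\<omega> \<in> space M. x \<le> l * (\<Sum>i\<in>I. clip c (X i \<omega>))}
           \<le> exp (- x + (l + l\<^sup>2 * c) * (\<Sum>i\<in>I. \<integral>\<omega>. clip c (X i \<omega>) \<partial>M))"
proof -
  interpret prob_space M by (fact M)
  define S where "S \<omega> = (\<Sum>i\<in>I. clip c (X i \<omega>))" for \<omega>
  have S [measurable]: "S \<in> borel_measurable M"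
    unfolding S_def by (intro borel_measurable_sum measurable_compose[OF X borel_measurable_clip])
  have "\<bar>S \<omega>\<bar> \<le> card I * c" for \<omega>
    using order.trans[OF sum_abs sum_mono[of I "\<lambda>i. \<bar>clip c (X i \<omega>)\<bar>" "\<lambda>_. c"]] abs_clip_le[OF c]
    by (auto simp: S_def)
  then have "integrable M (\<lambda>\<omega>. exp (l * S \<omega>))"
    by (intro integrable_const_bound[where B="exp (\<bar>l\<bar> * (card I * c))"] AE_I2)
       (auto simp: mult_le_abs_mult_bound)
  then have "measure M {\<omega> \<in> space M. exp x \<le> exp (l * S \<omega>)} \<le> (\<integral>\<omega>. exp (l * S \<omega>) \<partial>M) / exp x"
    by (intro integral_Markov_inequality_measure) auto
  also have "\<dots> \<le> exp ((l + l\<^sup>2 * c) * (\<Sum>i\<in>I. \<integral>\<omega>. clip c (X i \<omega>) \<partial>M)) / exp x"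
    unfolding S_def by (intro divide_right_mono NSD_integral_exp_clip_sum_le[OF M I X nsd c lc]) auto
  finally show ?thesis
    by (simp add: S_def exp_diff[symmetric])
qed

lemma NSD_clip_sum_concentration:
  fixes X :: "'i \<Rightarrow> 'a \<Rightarrow> real"
  assumes M: "prob_space M" and I: "finite I"
    and X: "\<And>i. i \<in> I \<Longrightarrow> X i \<in> borel_measurable M" and nsd: "NSD M I X"
    and c: "0 < c" and \<theta>: "0 < \<theta>" "\<theta> \<le> 1"
  defines "\<mu> \<equiv> \<Sum>i\<in>I. \<integral>\<omega>. clip c (X i \<omega>) \<partial>M"
  shows "measure M {\<omega> \<in> space M. \<delta> \<le> \<bar>(\<Sum>i\<in>I. clip c (X i \<omega>)) - \<mu>\<bar>}
           \<le> 2 * exp (- (\<theta> * (\<delta> - \<theta> * \<mu>) / c))"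
proof -
  interpret prob_space M by (fact M)
  define S where "S \<omega> = (\<Sum>i\<in>I. clip c (X i \<omega>))" for \<omega>
  define l where "l = \<theta> / c"
  define bound where "bound = exp (- (\<theta> * (\<delta> - \<theta> * \<mu>) / c))"
  have S [measurable]: "S \<in> borel_measurable M"
    unfolding S_def by (intro borel_measurable_sum measurable_compose[OF X borel_measurable_clip])
  have lc: "\<bar>l\<bar> * c \<le> 1" "\<bar>- l\<bar> * c \<le> 1" and l: "0 < l"
    using c \<theta> by (auto simp: l_def)
  have exponents: "- (l * (\<mu> + \<delta>)) + (l + l\<^sup>2 * c) * \<mu> = - (\<theta> * (\<delta> - \<theta> * \<mu>) / c)"
    "- (- l * (\<mu> - \<delta>)) + (- l + (- l)\<^sup>2 * c) * \<mu> = - (\<theta> * (\<delta> - \<theta> * \<mu>) / c)"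
    using c by (simp_all add: l_def power2_eq_square field_simps)
  have "measure M {\<omega> \<in> space M. l * (\<mu> + \<delta>) \<le> l * S \<omega>} \<le> bound"
    using NSD_measure_clip_sum_ge_le[OF M I X nsd less_imp_le[OF c] lc(1), of "l * (\<mu> + \<delta>)"]
    unfolding \<mu>_def[symmetric] S_def[symmetric] exponents(1) bound_def by simp
  moreover have "measure M {\<omega> \<in> space M. - l * (\<mu> - \<delta>) \<le> - l * S \<omega>} \<le> bound"
    using NSD_measure_clip_sum_ge_le[OF M I X nsd less_imp_le[OF c] lc(2), of "- l * (\<mu> - \<delta>)"]
    unfolding \<mu>_def[symmetric] S_def[symmetric] exponents(2) bound_def by simp
  moreover have "{\<omega> \<in> space M. \<delta> \<le> \<bar>S \<omega> - \<mu>\<bar>}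
      \<subseteq> {\<omega> \<in> space M. l * (\<mu> + \<delta>) \<le> l * S \<omega>} \<union> {\<omega> \<in> space M. - l * (\<mu> - \<delta>) \<le> - l * S \<omega>}"
    using l by (auto simp: abs_le_iff mult_le_cancel_left)
  then have "measure M {\<omega> \<in> space M. \<delta> \<le> \<bar>S \<omega> - \<mu>\<bar>}
      \<le> measure M {\<omega> \<in> space M. l * (\<mu> + \<delta>) \<le> l * S \<omega>} + measure M {\<omega> \<in> space M. - l * (\<mu> - \<delta>) \<le> - l * S \<omega>}"
    by (intro order.trans[OF finite_measure_mono measure_Un_le]) auto
  ultimately show ?thesis by (simp add: S_def bound_def)
qed

lemma integral_clip_bounds:
  fixes X :: "'a \<Rightarrow> real" and a K c p :: real
  assumes M: "prob_space M" and X [measurable]: "X \<in> borel_measurable M"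
    and pos: "\<And>\<omega>. \<omega> \<in> space M \<Longrightarrow> 0 < X \<omega>"
    and mean: "integrable M X \<and> (\<integral>\<omega>. X \<omega> \<partial>M) = a"
    and moment: "integrable M (\<lambda>\<omega>. X \<omega> powr p) \<and> (\<integral>\<omega>. X \<omega> powr p \<partial>M) \<le> K"
    and c: "0 < c" and p: "1 \<le> p"
  shows "a - K / c powr (p - 1) \<le> (\<integral>\<omega>. clip c (X \<omega>) \<partial>M)"
    and "(\<integral>\<omega>. clip c (X \<omega>) \<partial>M) \<le> a"
proof -
  interpret prob_space M by (fact M)
  have int_clip: "integrable M (\<lambda>\<omega>. clip c (X \<omega>))"
    using c by (intro integrable_const_bound[where B=c] AE_I2) (auto simp: abs_clip_le)
  have "a - (\<integral>\<omega>. clip c (X \<omega>) \<partial>M) = (\<integral>\<omega>. X \<omega> - clip c (X \<omega>) \<partial>M)"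
    using mean int_clip by simp
  also have "\<dots> \<le> (\<integral>\<omega>. X \<omega> powr p / c powr (p - 1) \<partial>M)"
    using mean int_clip moment pos c p by (intro integral_mono diff_clip_le_powr) auto
  also have "\<dots> \<le> K / c powr (p - 1)"
    using moment by (simp add: divide_right_mono)
  finally show "a - K / c powr (p - 1) \<le> (\<integral>\<omega>. clip c (X \<omega>) \<partial>M)"
    by simp
  show "(\<integral>\<omega>. clip c (X \<omega>) \<partial>M) \<le> a"
  proof -
    have "(\<integral>\<omega>. clip c (X \<omega>) \<partial>M) \<le> (\<integral>\<omega>. X \<omega> \<partial>M)"
      using mean int_clip pos by (intro integral_mono clip_le_self less_imp_le) auto
    then show ?thesis using mean by simp
  qed
qed

lemma measure_UN_gt_le_moment:
  fixes X :: "'i \<Rightarrow> 'a \<Rightarrow> real" and K c p :: real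
  assumes M: "prob_space M" and I: "finite I"
    and X: "\<And>i. i \<in> I \<Longrightarrow> X i \<in> borel_measurable M"
    and moment: "\<And>i. i \<in> I \<Longrightarrow>
                   integrable M (\<lambda>\<omega>. X i \<omega> powr p) \<and> (\<integral>\<omega>. X i \<omega> powr p \<partial>M) \<le> K"
    and c: "0 < c" and p: "0 < p"
  shows "measure M (\<Union>i\<in>I. {\<omega> \<in> space M. c < X i \<omega>}) \<le> card I * K / c powr p"
proof -
  interpret prob_space M by (fact M)
  have "measure M {\<omega> \<in> space M. c < X i \<omega>} \<le> K / c powr p" if i: "i \<in> I" for i
  proof -
    have [measurable]: "X i \<in> borel_measurable M"
      by (rule X[OF i])
    have "measure M {\<omega> \<in> space M. c < X i \<omega>} \<le> measure M {\<omega> \<in> space M. c powr p \<le> X i \<omega> powr p}"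
      using c p by (intro finite_measure_mono) (auto intro: powr_mono2)
    also have "\<dots> \<le> (\<integral>\<omega>. X i \<omega> powr p \<partial>M) / c powr p"
      using moment[OF i] c by (intro integral_Markov_inequality_measure) auto
    also have "\<dots> \<le> K / c powr p"
      using moment[OF i] by (simp add: divide_right_mono)
    finally show ?thesis .
  qed
  then have "measure M (\<Union>i\<in>I. {\<omega> \<in> space M. c < X i \<omega>}) \<le> (\<Sum>i\<in>I. K / c powr p)"
    using X by (intro order.trans[OF finite_measure_subadditive_finite] sum_mono I) auto
  then show ?thesis
    by simp
qed

lemma sum_deviation_subset:
  fixes X :: "'i \<Rightarrow> 'a \<Rightarrow> real" and a c \<epsilon> \<mu> :: real
  assumes pos: "\<And>i \<omega>. i \<in> I \<Longrightarrow> \<omega> \<in> A \<Longrightarrow> 0 < X i \<omega>"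
    and \<mu>: "\<bar>card I * a - \<mu>\<bar> \<le> \<epsilon> / 2"
  shows "{\<omega> \<in> A. \<epsilon> < \<bar>\<Sum>i\<in>I. (X i \<omega> - a)\<bar>}
           \<subseteq> (\<Union>i\<in>I. {\<omega> \<in> A. c < X i \<omega>}) \<union> {\<omega> \<in> A. \<epsilon> / 2 \<le> \<bar>(\<Sum>i\<in>I. clip c (X i \<omega>)) - \<mu>\<bar>}"
proof
  fix \<omega> assume "\<omega> \<in> {\<omega> \<in> A. \<epsilon> < \<bar>\<Sum>i\<in>I. (X i \<omega> - a)\<bar>}"
  then have \<omega>: "\<omega> \<in> A" "\<epsilon> < \<bar>\<Sum>i\<in>I. (X i \<omega> - a)\<bar>" by auto
  show "\<omega> \<in> (\<Union>i\<in>I. {\<omega> \<in> A. c < X i \<omega>}) \<union> {\<omega> \<in> A. \<epsilon> / 2 \<le> \<bar>(\<Sum>i\<in>I. clip c (X i \<omega>)) - \<mu>\<bar>}"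
  proof (cases "\<exists>i\<in>I. c < X i \<omega>")
    case False
    then have "(\<Sum>i\<in>I. clip c (X i \<omega>)) = (\<Sum>i\<in>I. X i \<omega>)"
      using pos \<omega>(1) by (intro sum.cong) (auto simp: clip_eq_self less_imp_le)
    then have "\<epsilon> / 2 \<le> \<bar>(\<Sum>i\<in>I. clip c (X i \<omega>)) - \<mu>\<bar>"
      using \<omega>(2) \<mu> by (auto simp: sum_subtractf abs_if split: if_split_asm)
    with \<omega>(1) show ?thesis by simp
  qed (use \<omega> in auto)
qed

lemma NSD_sum_deviation_measure_le:
  fixes X :: "'i \<Rightarrow> 'a \<Rightarrow> real" and a K p c \<theta> \<epsilon> :: real
  assumes M: "prob_space M" and I: "finite I"
    and X: "\<And>i. i \<in> I \<Longrightarrow> X i \<in> borel_measurable M" and nsd: "NSD M I X"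
    and pos: "\<And>i \<omega>. i \<in> I \<Longrightarrow> \<omega> \<in> space M \<Longrightarrow> 0 < X i \<omega>"
    and mean: "\<And>i. i \<in> I \<Longrightarrow> integrable M (X i) \<and> (\<integral>\<omega>. X i \<omega> \<partial>M) = a"
    and moment: "\<And>i. i \<in> I \<Longrightarrow>
                   integrable M (\<lambda>\<omega>. X i \<omega> powr p) \<and> (\<integral>\<omega>. X i \<omega> powr p \<partial>M) \<le> K"
    and p: "1 \<le> p" and c: "0 < c" and \<theta>: "0 < \<theta>" "\<theta> \<le> 1"
    and \<epsilon>_mean: "4 * \<theta> * (card I * a) \<le> \<epsilon>"
    and \<epsilon>_trunc: "card I * K / c powr (p - 1) \<le> \<epsilon> / 2"
  shows "measure M {\<omega> \<in> space M. \<epsilon> < \<bar>\<Sum>i\<in>I. (X i \<omega> - a)\<bar>}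
           \<le> 2 * exp (- (\<theta> * \<epsilon> / (4 * c))) + card I * K / c powr p"
proof -
  interpret prob_space M by (fact M)
  define \<mu> where "\<mu> = (\<Sum>i\<in>I. \<integral>\<omega>. clip c (X i \<omega>) \<partial>M)"
  define large where "large = (\<Union>i\<in>I. {\<omega> \<in> space M. c < X i \<omega>})"
  define deviant where "deviant = {\<omega> \<in> space M. \<epsilon> / 2 \<le> \<bar>(\<Sum>i\<in>I. clip c (X i \<omega>)) - \<mu>\<bar>}"
  note clip_bounds = integral_clip_bounds[OF M X pos mean moment c p]
  have "card I * a - \<epsilon> / 2 \<le> card I * (a - K / c powr (p - 1))"
    using \<epsilon>_trunc by (simp add: right_diff_distrib)
  also have "\<dots> \<le> \<mu>"
    using sum_mono[OF clip_bounds(1)] by (simp add: \<mu>_def)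
  finally have \<mu>_lower: "card I * a - \<epsilon> / 2 \<le> \<mu>" .
  have \<mu>_upper: "\<mu> \<le> card I * a"
    using sum_mono[OF clip_bounds(2)] by (simp add: \<mu>_def)
  have "{\<omega> \<in> space M. c < X i \<omega>} \<in> sets M" if i: "i \<in> I" for i
  proof -
    have [measurable]: "X i \<in> borel_measurable M" by (rule X[OF i])
    show ?thesis by measurable
  qed
  then have large_sets: "large \<in> sets M"
    unfolding large_def by (intro sets.finite_UN I)
  have [measurable]: "(\<lambda>\<omega>. \<Sum>i\<in>I. clip c (X i \<omega>)) \<in> borel_measurable M"
    by (intro borel_measurable_sum measurable_compose[OF X borel_measurable_clip])
  then have deviant_sets: "deviant \<in> sets M"
    unfolding deviant_def by measurable
  have "{\<omega> \<in> space M. \<epsilon> < \<bar>\<Sum>i\<in>I. (X i \<omega> - a)\<bar>} \<subseteq> large \<union> deviant"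
    unfolding large_def deviant_def using pos \<mu>_lower \<mu>_upper
    by (intro sum_deviation_subset) (auto simp: abs_le_iff)
  then have "measure M {\<omega> \<in> space M. \<epsilon> < \<bar>\<Sum>i\<in>I. (X i \<omega> - a)\<bar>} \<le> measure M large + measure M deviant"
    using large_sets deviant_sets by (intro order.trans[OF finite_measure_mono measure_Un_le]) auto
  also have "measure M large \<le> card I * K / c powr p"
    unfolding large_def using p by (intro measure_UN_gt_le_moment[OF M I X moment c]) auto
  also have "measure M deviant \<le> 2 * exp (- (\<theta> * (\<epsilon> / 2 - \<theta> * \<mu>) / c))"
    unfolding deviant_def \<mu>_def by (rule NSD_clip_sum_concentration[OF M I X nsd c \<theta>])
  also have "\<dots> \<le> 2 * exp (- (\<theta> * \<epsilon> / (4 * c)))"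
  proof -
    have "4 * (\<theta> * \<mu>) \<le> \<epsilon>"
      using mult_left_mono[OF \<mu>_upper less_imp_le[OF \<theta>(1)]] \<epsilon>_mean by linarith
    then have "\<theta> * (\<epsilon> / 4) \<le> \<theta> * (\<epsilon> / 2 - \<theta> * \<mu>)"
      using \<theta> by (intro mult_left_mono) auto
    have "\<theta> * \<epsilon> / (4 * c) = \<theta> * (\<epsilon> / 4) / c" by simp
    also have "\<dots> \<le> \<theta> * (\<epsilon> / 2 - \<theta> * \<mu>) / c"
      using c by (intro divide_right_mono \<open>\<theta> * (\<epsilon> / 4) \<le> _\<close>) simp
    finally show ?thesis by (intro mult_left_mono exp_mono) auto
  qed
  finally show ?thesis by simp
qed

lemma mult_divide_powr_neg_powr_le:
  fixes x g G C p q \<alpha> :: real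
  assumes x: "1 \<le> x" and g: "g \<le> G * x" and G: "0 \<le> G" and C: "0 \<le> C"
    and \<alpha>: "0 \<le> \<alpha>" and q: "q \<le> p"
  shows "g * (C / x powr p) / (x powr - \<alpha>) powr q \<le> G * C * x powr (1 + \<alpha> * p - p)"
proof -
  have "(x powr - \<alpha>) powr q = x powr - (\<alpha> * q)"
    by (simp add: powr_powr)
  then have "g * (C / x powr p) / (x powr - \<alpha>) powr q = g * (C * x powr (\<alpha> * q - p))"
    using x by (simp add: powr_minus_divide powr_diff)
  also have "\<dots> \<le> G * x * (C * x powr (\<alpha> * q - p))"
    using g C by (intro mult_right_mono) auto
  also have "\<dots> = G * C * (x powr 1 * x powr (\<alpha> * q - p))"
    using x by simp
  also have "\<dots> = G * C * x powr (1 + \<alpha> * q - p)"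
    by (simp only: powr_add[symmetric] add_diff_eq)
  also have "\<dots> \<le> G * C * x powr (1 + \<alpha> * p - p)"
    using x G C \<alpha> q by (intro mult_left_mono powr_mono) (auto intro: mult_left_mono)
  finally show ?thesis .
qed

lemma summable_exp_neg_powr:
  fixes \<kappa> \<alpha> :: real
  assumes "0 < \<kappa>" "0 < \<alpha>"
  shows "summable (\<lambda>N::nat. exp (- (\<kappa> * real N powr \<alpha>)))"
proof (rule summable_comparison_test_ev[OF _ iffD2[OF summable_real_powr_iff, of "-2"]])
  have "((\<lambda>x::real. exp (- (\<kappa> * x powr \<alpha>)) * x powr 2) \<longlongrightarrow> 0) at_top"
    using assms by real_asymp
  then have "(\<lambda>N::nat. exp (- (\<kappa> * real N powr \<alpha>)) * real N powr 2) \<longlonglongrightarrow> 0"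
    by (rule filterlim_compose[OF _ filterlim_real_sequentially])
  then have "eventually (\<lambda>N. exp (- (\<kappa> * real N powr \<alpha>)) * real N powr 2 < 1) sequentially"
    by (rule order_tendstoD(2)) simp
  then show "eventually (\<lambda>N. norm (exp (- (\<kappa> * real N powr \<alpha>))) \<le> real N powr -2) sequentially"
    using eventually_gt_at_top[of 0]
    by eventually_elim (simp add: powr_minus field_simps)
qed simp

lemma AE_tendsto_zero_if_summable_measure:
  fixes X :: "nat \<Rightarrow> 'a \<Rightarrow> real"
  assumes M: "prob_space M" and X [measurable]: "\<And>n. X n \<in> borel_measurable M"
    and summable: "\<And>\<epsilon>. 0 < \<epsilon> \<Longrightarrow> summable (\<lambda>n. measure M {\<omega> \<in> space M. \<epsilon> < \<bar>X n \<omega>\<bar>})"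
  shows "AE \<omega> in M. (\<lambda>n. X n \<omega>) \<longlonglongrightarrow> 0"
proof -
  interpret prob_space M by (fact M)
  have "AE \<omega> in M. eventually (\<lambda>n. \<bar>X n \<omega>\<bar> \<le> \<epsilon>) sequentially" if "0 < \<epsilon>" for \<epsilon>
  proof -
    have "AE \<omega> in M. eventually (\<lambda>n. \<omega> \<in> space M - {\<omega> \<in> space M. \<epsilon> < \<bar>X n \<omega>\<bar>}) sequentially"
      by (intro borel_cantelli_AE1 summable[OF that]) (auto simp: less_top[symmetric])
    then show ?thesis
      by (rule eventually_mono) (auto elim: eventually_mono)
  qed
  then have "AE \<omega> in M. \<forall>k. eventually (\<lambda>n. \<bar>X n \<omega>\<bar> \<le> inverse (Suc k)) sequentially"
    by (simp add: AE_all_countable)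
  then show ?thesis
  proof (rule eventually_mono)
    fix \<omega> assume \<omega>: "\<forall>k. eventually (\<lambda>n. \<bar>X n \<omega>\<bar> \<le> inverse (Suc k)) sequentially"
    show "(\<lambda>n. X n \<omega>) \<longlonglongrightarrow> 0"
    proof (rule tendstoI)
      fix e :: real assume "0 < e"
      then obtain k where "inverse (Suc k) < e" using reals_Archimedean by blast
      with \<omega>[rule_format, of k] show "eventually (\<lambda>n. dist (X n \<omega>) 0 < e) sequentially"
        by (auto elim: eventually_mono)
    qed
  qed
qed

lemma integrable_integral_le_of_nn_integral_le:
  fixes f :: "'a \<Rightarrow> real"
  assumes f [measurable]: "f \<in> borel_measurable M" and nonneg: "\<And>x. x \<in> space M \<Longrightarrow> 0 \<le> f x"
    and le: "(\<integral>\<^sup>+x. ennreal (f x) \<partial>M) \<le> ennreal B" and B: "0 \<le> B"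
  shows "integrable M f \<and> (\<integral>x. f x \<partial>M) \<le> B"
proof
  show int: "integrable M f"
    using le nonneg by (intro integrableI_nonneg) (auto simp: le_less_trans)
  have "ennreal (\<integral>x. f x \<partial>M) = (\<integral>\<^sup>+x. ennreal (f x) \<partial>M)"
    using int nonneg by (intro nn_integral_eq_integral[symmetric]) auto
  with le have "ennreal (\<integral>x. f x \<partial>M) \<le> ennreal B"
    by simp
  with B show "(\<integral>x. f x \<partial>M) \<le> B"
    by (simp add: ennreal_le_iff)
qed

locale NSD_triangular_array = prob_space M for M :: "'a measure" +
  fixes t :: "nat \<Rightarrow> nat \<Rightarrow> 'a \<Rightarrow> real" and g :: "nat \<Rightarrow> nat" and r C G :: real
  assumes measurable_t: "\<And>N j. 1 \<le> N \<Longrightarrow> 1 \<le> j \<Longrightarrow> t N j \<in> borel_measurable M"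
    and t_pos: "\<And>N j \<omega>. 1 \<le> N \<Longrightarrow> 1 \<le> j \<Longrightarrow> \<omega> \<in> space M \<Longrightarrow> 0 < t N j \<omega>"
    and t_mean: "\<And>N j. 1 \<le> N \<Longrightarrow> 1 \<le> j \<Longrightarrow>
                   integrable M (t N j) \<and> (\<integral>\<omega>. t N j \<omega> \<partial>M) = 1 / real N"
    and t_moment: "\<And>N j. 1 \<le> N \<Longrightarrow> 1 \<le> j \<Longrightarrow>
                   integrable M (\<lambda>\<omega>. t N j \<omega> powr (2 + r))
                   \<and> (\<integral>\<omega>. t N j \<omega> powr (2 + r) \<partial>M) \<le> C / real N powr (2 + r)"
    and t_NSD: "\<And>N m. 1 \<le> N \<Longrightarrow> NSD M {1..m} (t N)"
    and r_pos: "0 < r" and C_nonneg: "0 \<le> C"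
    and G_pos: "0 < G" and g_le: "\<And>N. 1 \<le> N \<Longrightarrow> real (g N) \<le> G * real N"
begin

lemma measure_sum_deviation_le:
  fixes c \<theta> \<epsilon> :: real
  assumes N: "1 \<le> N" and c: "0 < c" and \<theta>: "0 < \<theta>" "\<theta> \<le> 1" "4 * \<theta> * G \<le> \<epsilon>"
    and trunc: "g N * (C / real N powr (2 + r)) / c powr (1 + r) \<le> \<epsilon> / 2"
  shows "measure M {\<omega> \<in> space M. \<epsilon> < \<bar>\<Sum>j=1..g N. (t N j \<omega> - 1 / real N)\<bar>}
           \<le> 2 * exp (- (\<theta> * \<epsilon> / (4 * c))) + g N * (C / real N powr (2 + r)) / c powr (2 + r)"
proof -
  have "4 * \<theta> * (g N * (1 / real N)) \<le> 4 * \<theta> * G"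
    using g_le[OF N] N \<theta> by (intro mult_left_mono) (auto simp: field_simps)
  then show ?thesis
    using NSD_sum_deviation_measure_le[OF prob_space_axioms _ _ t_NSD[OF N] _ _ t_moment _ c \<theta>(1,2),
        where a="1 / real N" and \<epsilon>=\<epsilon>] measurable_t t_pos t_mean N \<theta>(3) trunc r_pos
    by (simp add: add_diff_eq)
qed

lemma summable_measure_sum_deviation:
  assumes \<epsilon>: "0 < \<epsilon>"
  shows "summable (\<lambda>N. measure M {\<omega> \<in> space M. \<epsilon> < \<bar>\<Sum>j=1..g N. (t N j \<omega> - 1 / real N)\<bar>})"
proof -
  \<comment> \<open>At truncation level \<open>N powr - \<alpha>\<close> the Chernoff exponent grows like \<open>N powr \<alpha>\<close>,
    while the truncation terms stay of order \<open>N powr (1 + \<alpha> * p - p) = N powr (-1 - r / 2)\<close>.\<close>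
  define p where "p = 2 + r"
  define \<alpha> where "\<alpha> = r / (2 * p)"
  define \<theta> where "\<theta> = min 1 (\<epsilon> / (4 * G))"
  define \<kappa> where "\<kappa> = \<theta> * \<epsilon> / 4"
  define w where "w N = G * C * real N powr (-1 - r / 2)" for N :: nat
  have p: "1 \<le> p"
    using r_pos by (simp add: p_def)
  then have \<alpha>: "0 < \<alpha>" "\<alpha> * p = r / 2"
    using r_pos by (simp_all add: \<alpha>_def)
  have \<theta>: "0 < \<theta>" "\<theta> \<le> 1" "4 * \<theta> * G \<le> \<epsilon>"
    using \<epsilon> G_pos by (auto simp: \<theta>_def min_def field_simps)
  have \<kappa>: "0 < \<kappa>"
    using \<theta> \<epsilon> by (simp add: \<kappa>_def)
  have w: "summable w"
    unfolding w_def using r_pos by (intro summable_mult summable_real_powr_iff[THEN iffD2]) auto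
  have exponent: "1 + \<alpha> * p - p = -1 - r / 2"
    unfolding \<alpha>(2) by (simp add: p_def)
  have bound: "measure M {\<omega> \<in> space M. \<epsilon> < \<bar>\<Sum>j=1..g N. (t N j \<omega> - 1 / real N)\<bar>}
      \<le> 2 * exp (- (\<kappa> * real N powr \<alpha>)) + w N" if N: "1 \<le> N" and wN: "w N \<le> \<epsilon> / 2" for N
  proof -
    define c where "c = real N powr - \<alpha>"
    have c: "0 < c"
      using N by (simp add: c_def)
    have tail: "g N * (C / real N powr p) / c powr q \<le> w N" if "q \<le> p" for q
      unfolding c_def w_def exponent[symmetric] using N g_le G_pos C_nonneg \<alpha> that
      by (intro mult_divide_powr_neg_powr_le) auto
    have "g N * (C / real N powr (2 + r)) / c powr (1 + r) \<le> \<epsilon> / 2"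
      using order.trans[OF tail wN] by (simp add: p_def)
    moreover have "\<theta> * \<epsilon> / (4 * c) = \<kappa> * real N powr \<alpha>"
      by (simp add: c_def \<kappa>_def powr_minus field_simps)
    ultimately have "measure M {\<omega> \<in> space M. \<epsilon> < \<bar>\<Sum>j=1..g N. (t N j \<omega> - 1 / real N)\<bar>}
        \<le> 2 * exp (- (\<kappa> * real N powr \<alpha>)) + g N * (C / real N powr p) / c powr p"
      using measure_sum_deviation_le[OF N c \<theta>] by (simp add: p_def)
    then show ?thesis
      using tail[of p] by simp
  qed
  show ?thesis
  proof (rule summable_comparison_test_ev)
    show "summable (\<lambda>N. 2 * exp (- (\<kappa> * real N powr \<alpha>)) + w N)"
      by (intro summable_add summable_mult summable_exp_neg_powr \<kappa> \<alpha> w)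
    have "eventually (\<lambda>N. w N < \<epsilon> / 2) sequentially"
      using summable_LIMSEQ_zero[OF w] \<epsilon> by (intro order_tendstoD(2)) auto
    then show "eventually (\<lambda>N. norm (measure M {\<omega> \<in> space M. \<epsilon> < \<bar>\<Sum>j=1..g N. (t N j \<omega> - 1 / real N)\<bar>})
        \<le> 2 * exp (- (\<kappa> * real N powr \<alpha>)) + w N) sequentially"
      using eventually_ge_at_top[of 1] by eventually_elim (use bound in simp)
  qed
qed

lemma AE_sum_deviation_tendsto_zero:
  "AE \<omega> in M. (\<lambda>N. \<Sum>j=1..g N. (t N j \<omega> - 1 / real N)) \<longlonglongrightarrow> 0"
proof -
  define S where "S N \<omega> = (\<Sum>j=1..g N. (t N j \<omega> - 1 / real N))" for N \<omega>
  have "AE \<omega> in M. (\<lambda>N. S (Suc N) \<omega>) \<longlonglongrightarrow> 0"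
  proof (rule AE_tendsto_zero_if_summable_measure[OF prob_space_axioms])
    show "S (Suc N) \<in> borel_measurable M" for N
      unfolding S_def by (intro borel_measurable_sum borel_measurable_diff measurable_t) auto
    show "summable (\<lambda>N. measure M {\<omega> \<in> space M. \<epsilon> < \<bar>S (Suc N) \<omega>\<bar>})" if "0 < \<epsilon>" for \<epsilon>
      using summable_Suc_iff[of "\<lambda>N. measure M {\<omega> \<in> space M. \<epsilon> < \<bar>S N \<omega>\<bar>}"]
        summable_measure_sum_deviation[OF that]
      by (simp add: S_def)
  qed
  then show ?thesis
    unfolding S_def by (rule eventually_mono) (rule filterlim_sequentially_Suc[THEN iffD1])
qed

lemma AE_sum_centred_tendsto_zero:
  "AE \<omega> in M. (\<lambda>N. \<Sum>j=1..g N. (t N j \<omega> - (\<integral>\<omega>'. t N j \<omega>' \<partial>M))) \<longlonglongrightarrow> 0"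
  using AE_sum_deviation_tendsto_zero
proof (rule eventually_mono)
  fix \<omega> assume "(\<lambda>N. \<Sum>j=1..g N. (t N j \<omega> - 1 / real N)) \<longlonglongrightarrow> 0"
  moreover have "eventually (\<lambda>N. (\<Sum>j=1..g N. (t N j \<omega> - 1 / real N))
      = (\<Sum>j=1..g N. (t N j \<omega> - (\<integral>\<omega>'. t N j \<omega>' \<partial>M)))) sequentially"
    using eventually_ge_at_top[of 1] by eventually_elim (simp add: t_mean)
  ultimately show "(\<lambda>N. \<Sum>j=1..g N. (t N j \<omega> - (\<integral>\<omega>'. t N j \<omega>' \<partial>M))) \<longlonglongrightarrow> 0"
    by (rule Lim_transform_eventually)
qed

lemma AE_sum_tendsto:
  assumes g: "(\<lambda>N. real (g N) / real N) \<longlonglongrightarrow> L"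
  shows "AE \<omega> in M. (\<lambda>N. \<Sum>j=1..g N. t N j \<omega>) \<longlonglongrightarrow> L"
  using AE_sum_deviation_tendsto_zero
proof (rule eventually_mono)
  fix \<omega> assume "(\<lambda>N. \<Sum>j=1..g N. (t N j \<omega> - 1 / real N)) \<longlonglongrightarrow> 0"
  from tendsto_add[OF this g]
  have "(\<lambda>N. (\<Sum>j=1..g N. (t N j \<omega> - 1 / real N)) + real (g N) / real N) \<longlonglongrightarrow> L"
    by simp
  moreover have "eventually (\<lambda>N. (\<Sum>j=1..g N. (t N j \<omega> - 1 / real N)) + real (g N) / real N
      = (\<Sum>j=1..g N. t N j \<omega>)) sequentially"
    using eventually_ge_at_top[of 1] by eventually_elim (simp add: sum_subtractf)
  ultimately show "(\<lambda>N. \<Sum>j=1..g N. t N j \<omega>) \<longlonglongrightarrow> L"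
    by (rule Lim_transform_eventually)
qed

end

theorem proposition4p2:
  fixes M :: "'a measure"
    and t :: "nat \<Rightarrow> nat \<Rightarrow> 'a \<Rightarrow> real"
    and g :: "nat \<Rightarrow> nat"
    and r C L :: real
  assumes "prob_space M"
    and meas: "\<And>N j. N \<ge> 1 \<Longrightarrow> j \<ge> 1 \<Longrightarrow> t N j \<in> borel_measurable M"
    and pos: "\<And>N j \<omega>. N \<ge> 1 \<Longrightarrow> j \<ge> 1 \<Longrightarrow> \<omega> \<in> space M \<Longrightarrow> t N j \<omega> > 0"
    and mean: "\<And>N j. N \<ge> 1 \<Longrightarrow> j \<ge> 1 \<Longrightarrow>
                  integrable M (t N j) \<and> (\<integral>\<omega>. t N j \<omega> \<partial>M) = 1 / real N"
    and "r > 0" and "C > 0"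
    and moment: "\<And>N j. N \<ge> 1 \<Longrightarrow> j \<ge> 1 \<Longrightarrow>
                  (\<integral>\<^sup>+\<omega>. ennreal (t N j \<omega> powr (2 + r)) \<partial>M)
                    \<le> ennreal (C / real N powr (2 + r))"
    and nsd: "\<And>N m. N \<ge> 1 \<Longrightarrow> NSD M {1..m} (\<lambda>j. t N j)"
    and "L > 0"
    and glim: "(\<lambda>N. real (g N) / real N) \<longlonglongrightarrow> L"
  shows "(AE \<omega> in M. (\<lambda>N. \<Sum>j=1..g N. (t N j \<omega> - (\<integral>\<omega>'. t N j \<omega>' \<partial>M))) \<longlonglongrightarrow> 0)
       \<and> (AE \<omega> in M. (\<lambda>N. \<Sum>j=1..g N. t N j \<omega>) \<longlonglongrightarrow> L)"
proof -
  obtain G where G: "0 < G" "\<And>N. \<bar>real (g N) / real N\<bar> \<le> G"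
    using convergent_imp_Bseq[OF convergentI[OF glim]] by (auto elim!: BseqE)
  have moment': "integrable M (\<lambda>\<omega>. t N j \<omega> powr (2 + r))
      \<and> (\<integral>\<omega>. t N j \<omega> powr (2 + r) \<partial>M) \<le> C / real N powr (2 + r)" if "1 \<le> N" "1 \<le> j" for N j
    using meas[OF that] moment[OF that] \<open>C > 0\<close> by (intro integrable_integral_le_of_nn_integral_le) auto
  have g_le: "real (g N) \<le> G * real N" if "1 \<le> N" for N
    using G(2)[of N] that by (simp add: field_simps)
  interpret NSD_triangular_array M t g r C G
    by (intro NSD_triangular_array.intro NSD_triangular_array_axioms.intro assms(1))
       (fact meas pos mean moment' nsd \<open>r > 0\<close> less_imp_le[OF \<open>C > 0\<close>] G(1) g_le)+
  show ?thesis
    using AE_sum_centred_tendsto_zero AE_sum_tendsto[OF glim] by blast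
qed

end
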